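(* Let $p\in(0,1/16)$, let $m,n$ be positive integers, and let $D_{mn}(p)=\{q\in(0,1/16):\ \tfrac{15}{16}\le\tfrac{q^n}{p^m}\le\tfrac{16}{15}\}$. Fix $i,j\in\{3,4\}$ and for $q\in(0,1/16)$ and $\sigma,\tau\in I^\infty$ put $\varphi_1(q,\sigma)=S_1^mS_i\pi_{pq}(\sigma)$ and $\varphi_2(q,\tau)=S_2^nS_j\pi_{pq}(\tau)$, where the maps $S_2,S_4$ are those with parameter $q$. Then for all $\sigma,\tau\in I^\infty$ and all $q,q'\in D_{mn}(p)$ with $q\neq q'$, $$|\varphi_1(q,\sigma)-\varphi_2(q,\tau)-\varphi_1(q',\sigma)+\varphi_2(q',\tau)|>11\,p^m|q'-q|.$$
   Context: For $p,q\in(0,1/2)$ let $S_1(x)=px$, $S_2(x)=qx$, $S_3(x)=px+1-p$, $S_4(x)=qx+1-q$, and let $K_{pq}$ be the attractor of $\{S_1,S_2,S_3,S_4\}$ (the unique nonempty compact $K\subset\mathbb R$ with $K=\bigcup_{i=1}^4S_i(K)$). $I=\{1,2,3,4\}$, $I^\infty$ is the set of infinite sequences over $I$, and $\pi_{pq}:I^\infty\to K_{pq}$ sends $\sigma=\sigma_1\sigma_2\dots$ to the unique point of $\bigcap_{k\ge1}S_{\sigma_1}\circ\cdots\circ S_{\sigma_k}(K_{pq})$. *)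

theory Defs
  imports "HOL-Analysis.Analysis"
begin

definition S :: "real \<Rightarrow> real \<Rightarrow> nat \<Rightarrow> real \<Rightarrow> real" where
  "S p q k x = (if k = 1 then p * x
                else if k = 2 then q * x
                else if k = 3 then p * x + 1 - p
                else q * x + 1 - q)"

definition attractor :: "real \<Rightarrow> real \<Rightarrow> real set" where
  "attractor p q = (THE K. compact K \<and> K \<noteq> {} \<and> K = (\<Union>k\<in>{1,2,3,4}. S p q k ` K))"

text \<open>Infinite words over I = {1,2,3,4}: functions nat => nat with values in {1..4}.
  wcomp p q \<sigma> k = S_{\<sigma>_1} o ... o S_{\<sigma>_k} (with \<sigma>_1 = \<sigma> 0).\<close>
primrec wcomp :: "real \<Rightarrow> real \<Rightarrow> (nat \<Rightarrow> nat) \<Rightarrow> nat \<Rightarrow> real \<Rightarrow> real" where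
  "wcomp p q \<sigma> 0 = id"
| "wcomp p q \<sigma> (Suc k) = wcomp p q \<sigma> k \<circ> S p q (\<sigma> k)"

definition words :: "(nat \<Rightarrow> nat) set" where
  "words = {\<sigma>. \<forall>k. \<sigma> k \<in> {1,2,3,4}}"

definition piK :: "real \<Rightarrow> real \<Rightarrow> (nat \<Rightarrow> nat) \<Rightarrow> real" where
  "piK p q \<sigma> = (THE x. x \<in> (\<Inter>k\<in>{1..}. wcomp p q \<sigma> k ` attractor p q))"

definition Dmn :: "nat \<Rightarrow> nat \<Rightarrow> real \<Rightarrow> real set" where
  "Dmn m n p = {q. 0 < q \<and> q < 1/16 \<and> 15/16 \<le> q ^ n / p ^ m \<and> q ^ n / p ^ m \<le> 16/15}"

definition phi1 :: "real \<Rightarrow> nat \<Rightarrow> nat \<Rightarrow> real \<Rightarrow> (nat \<Rightarrow> nat) \<Rightarrow> real" where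
  "phi1 p m i q \<sigma> = (S p q 1 ^^ m) (S p q i (piK p q \<sigma>))"

definition phi2 :: "real \<Rightarrow> nat \<Rightarrow> nat \<Rightarrow> real \<Rightarrow> (nat \<Rightarrow> nat) \<Rightarrow> real" where
  "phi2 p n j q \<tau> = (S p q 2 ^^ n) (S p q j (piK p q \<tau>))"

end

theory Submission
  imports Defs
begin

text \<open>Writing S_k x = r_k x + b_k, the coding map is the series
  \<pi>(\<sigma>) = \<Sum>_l b_{\<sigma>_l} r_{\<sigma>_0} \<cdots> r_{\<sigma>_{l-1}}; its image over all words is the unique nonempty
  compact invariant set, so it is the attractor and \<pi>_pq is this series. Then
  \<phi>_1(q,\<sigma>) = p^m \<pi>_q(i\<sigma>) and \<phi>_2(q,\<tau>) = q^n \<pi>_q(j\<tau>), where i\<sigma> = case_nat i \<sigma> is the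
  word i followed by \<sigma>, and the quantity to bound splits as
  p^m (\<pi>_q - \<pi>_q')(i\<sigma>) - (q^n - q'^n) \<pi>_q(j\<tau>) - q'^n (\<pi>_q - \<pi>_q')(j\<tau>).
  Peeling off the first letter of a word gives
  |\<pi>_q(\<sigma>) - \<pi>_q'(\<sigma>)| \<le> |q - q'| + 1/16 |\<pi>_q(\<sigma>') - \<pi>_q'(\<sigma>')| for the shifted word \<sigma>',
  so taking suprema |\<pi>_q - \<pi>_q'| \<le> 16/15 |q - q'|,
  while on D_mn the middle term dominates: |q^n - q'^n| \<ge> 15 p^m |q - q'| and \<pi>_q(j\<tau>) \<ge> 15/16.
  The constants give 225/16 - 16/15 - 256/225 > 11.\<close>

lemma LIMSEQ_geometric_bound:
  fixes f :: "nat \<Rightarrow> real"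
  assumes "0 \<le> c" "c < 1" "\<And>n. \<bar>f n - L\<bar> \<le> C * c ^ n"
  shows "f \<longlonglongrightarrow> L"
proof -
  have "(\<lambda>n. C * c ^ n) \<longlonglongrightarrow> 0"
    using LIMSEQ_power_zero[of c] assms(1,2) tendsto_mult_right_zero by auto
  then have "(\<lambda>n. f n - L) \<longlonglongrightarrow> 0"
    by (rule Lim_null_comparison[rotated]) (use assms(3) in auto)
  then show ?thesis using Lim_null by blast
qed

lemma eq_geometric_bound:
  fixes x y :: real
  assumes "0 \<le> c" "c < 1" "\<And>n. \<bar>x - y\<bar> \<le> C * c ^ n"
  shows "x = y"
  using LIMSEQ_geometric_bound[OF assms] LIMSEQ_const_iff by blast

lemma bound_of_contraction:
  fixes f :: "'a \<Rightarrow> real" and g :: "'a \<Rightarrow> 'a"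
  assumes bounded: "\<And>x. \<bar>f x\<bar> \<le> B" and "0 \<le> c" "c < 1"
    and contraction: "\<And>x. \<bar>f x\<bar> \<le> a + c * \<bar>f (g x)\<bar>"
  shows "\<bar>f x\<bar> \<le> a / (1 - c)"
proof -
  define M where "M = (SUP x. \<bar>f x\<bar>)"
  have le_M: "\<bar>f x\<bar> \<le> M" for x
    unfolding M_def by (rule cSUP_upper) (use bounded in \<open>auto intro: bdd_aboveI[of _ B]\<close>)
  have "M \<le> a + c * M"
  proof (subst M_def, rule cSUP_least)
    show "\<bar>f x\<bar> \<le> a + c * M" for x
      using contraction[of x] mult_left_mono[OF le_M[of "g x"] \<open>0 \<le> c\<close>] by linarith
  qed simp
  then have "M \<le> a / (1 - c)" using \<open>c < 1\<close> by (simp add: le_divide_eq algebra_simps)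
  then show ?thesis using le_M[of x] by linarith
qed

lemma image_closure_eq_closure_image:
  fixes f :: "'a::heine_borel \<Rightarrow> 'b::metric_space"
  assumes "continuous_on UNIV f" "bounded A"
  shows "f ` closure A = closure (f ` A)"
proof
  show "f ` closure A \<subseteq> closure (f ` A)"
    using image_closure_subset[OF continuous_on_subset[OF assms(1)] closed_closure closure_subset]
    by simp
  have "compact (f ` closure A)"
    using assms compact_closure compact_continuous_image continuous_on_subset by blast
  then show "closure (f ` A) \<subseteq> f ` closure A"
    by (meson closure_minimal closure_subset compact_imp_closed image_mono)
qed

lemma power_diff_ge:
  fixes a b :: real
  assumes "0 \<le> b" "b \<le> a" "0 < n"
  shows "(a - b) * b ^ (n - 1) \<le> a ^ n - b ^ n"
proof -
  obtain k where n: "n = Suc k" using assms(3) by (cases n) auto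
  have "b ^ k \<le> a ^ k" using assms by (intro power_mono) auto
  then have "a * b ^ k \<le> a * a ^ k" using assms by (intro mult_left_mono) auto
  then show ?thesis using n by (simp add: algebra_simps)
qed

definition ratio :: "real \<Rightarrow> real \<Rightarrow> nat \<Rightarrow> real" where
  "ratio p q k = (if k = 1 \<or> k = 3 then p else q)"

definition offset :: "real \<Rightarrow> real \<Rightarrow> nat \<Rightarrow> real" where
  "offset p q k = (if k = 1 \<or> k = 2 then 0 else 1 - ratio p q k)"

lemma S_affine: "S p q k x = ratio p q k * x + offset p q k"
  by (simp add: S_def ratio_def offset_def)

definition ratio_prod :: "real \<Rightarrow> real \<Rightarrow> (nat \<Rightarrow> nat) \<Rightarrow> nat \<Rightarrow> real" where
  "ratio_prod p q \<sigma> k = (\<Prod>l<k. ratio p q (\<sigma> l))"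

lemma wcomp_affine:
  "wcomp p q \<sigma> k x = (\<Sum>l<k. offset p q (\<sigma> l) * ratio_prod p q \<sigma> l) + ratio_prod p q \<sigma> k * x"
  by (induction k arbitrary: x) (simp_all add: S_affine ratio_prod_def algebra_simps)

definition coding :: "real \<Rightarrow> real \<Rightarrow> (nat \<Rightarrow> nat) \<Rightarrow> real" where
  "coding p q \<sigma> = (\<Sum>l. offset p q (\<sigma> l) * ratio_prod p q \<sigma> l)"

definition codings :: "real \<Rightarrow> real \<Rightarrow> real set" where
  "codings p q = coding p q ` words"

context
  fixes p q :: real
  assumes p: "0 < p" "p < 1" and q: "0 < q" "q < 1"
begin

lemma max_bounds: "0 \<le> max p q" "max p q < 1"
  using p q by auto

lemma ratio_bounds: "0 < ratio p q k" "ratio p q k \<le> max p q"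
  using p q by (auto simp: ratio_def)

lemma S_unit_interval:
  assumes "x \<in> {0..1}"
  shows "S p q k x \<in> {0..1}"
proof -
  have "0 \<le> ratio p q k * x" "ratio p q k * x \<le> ratio p q k" "ratio p q k < 1"
    using assms ratio_bounds[of k] p q by (auto intro: mult_left_le)
  then show ?thesis by (auto simp: S_affine offset_def)
qed

lemma wcomp_unit_interval: "x \<in> {0..1} \<Longrightarrow> wcomp p q \<sigma> k x \<in> {0..1}"
  by (induction k arbitrary: x) (simp_all add: S_unit_interval del: atLeastAtMost_iff)

lemma ratio_prod_bounds: "0 \<le> ratio_prod p q \<sigma> k" "ratio_prod p q \<sigma> k \<le> max p q ^ k"
proof -
  show "0 \<le> ratio_prod p q \<sigma> k"
    unfolding ratio_prod_def by (rule prod_nonneg) (use ratio_bounds less_imp_le in blast)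
  have "ratio_prod p q \<sigma> k \<le> (\<Prod>l<k. max p q)"
    unfolding ratio_prod_def by (rule prod_mono) (use ratio_bounds less_imp_le in blast)
  then show "ratio_prod p q \<sigma> k \<le> max p q ^ k" by simp
qed

lemma coding_summable: "summable (\<lambda>l. offset p q (\<sigma> l) * ratio_prod p q \<sigma> l)"
proof (rule summable_comparison_test'[of "\<lambda>l. max p q ^ l" 0])
  show "summable (\<lambda>l. max p q ^ l)" using p q by simp
  have "0 \<le> offset p q k" "offset p q k \<le> 1" for k
    using ratio_bounds[of k] p q by (auto simp: offset_def)
  then show "norm (offset p q (\<sigma> l) * ratio_prod p q \<sigma> l) \<le> max p q ^ l" for l
    using ratio_prod_bounds[of \<sigma> l] by (simp add: abs_mult) (meson mult_left_le_one_le order_trans)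
qed

lemma coding_unit_interval: "coding p q \<sigma> \<in> {0..1}"
proof -
  have partial: "(\<Sum>l<k. offset p q (\<sigma> l) * ratio_prod p q \<sigma> l) \<in> {0..1}" for k
    using wcomp_unit_interval[of 0 \<sigma> k] by (simp add: wcomp_affine)
  have "(\<lambda>k. \<Sum>l<k. offset p q (\<sigma> l) * ratio_prod p q \<sigma> l) \<longlonglongrightarrow> coding p q \<sigma>"
    unfolding coding_def using coding_summable summable_LIMSEQ by blast
  then show ?thesis
    using partial closed_real_atLeastAtMost by (meson LIMSEQ_le_const LIMSEQ_le_const2 atLeastAtMost_iff)
qed

lemma coding_shift: "coding p q \<sigma> = S p q (\<sigma> 0) (coding p q (\<lambda>l. \<sigma> (Suc l)))"
proof -
  let ?t = "\<lambda>\<sigma> l. offset p q (\<sigma> l) * ratio_prod p q \<sigma> l"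
  have t_Suc: "?t \<sigma> (Suc l) = ratio p q (\<sigma> 0) * ?t (\<lambda>l. \<sigma> (Suc l)) l" for l
    unfolding ratio_prod_def by (simp only: prod.lessThan_Suc_shift) simp
  have "coding p q \<sigma> = (\<Sum>l. ?t \<sigma> (Suc l)) + ?t \<sigma> 0"
    unfolding coding_def using suminf_split_head[OF coding_summable] by simp
  also have "(\<Sum>l. ?t \<sigma> (Suc l)) = ratio p q (\<sigma> 0) * coding p q (\<lambda>l. \<sigma> (Suc l))"
    unfolding t_Suc coding_def by (rule suminf_mult[OF coding_summable])
  finally show ?thesis by (simp add: S_affine ratio_prod_def)
qed

lemma coding_Cons: "coding p q (case_nat k \<sigma>) = S p q k (coding p q \<sigma>)"
  using coding_shift[of "case_nat k \<sigma>"] by simp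

lemma coding_Cons_lower:
  assumes "k \<in> {3,4}"
  shows "1 - max p q \<le> coding p q (case_nat k \<sigma>)"
proof -
  have "0 \<le> ratio p q k * coding p q \<sigma>"
    using coding_unit_interval[of \<sigma>] ratio_bounds[of k] by simp
  then show ?thesis
    using assms ratio_bounds[of k] by (auto simp: coding_Cons S_affine offset_def)
qed

lemma coding_wcomp: "coding p q \<sigma> = wcomp p q \<sigma> k (coding p q (\<lambda>l. \<sigma> (l + k)))"
proof (induction k)
  case (Suc k)
  then show ?case using coding_shift[of "\<lambda>l. \<sigma> (l + k)"] by simp
qed simp

lemma wcomp_dist_coding:
  assumes "\<bar>x\<bar> \<le> B"
  shows "\<bar>wcomp p q \<sigma> k x - coding p q \<sigma>\<bar> \<le> (B + 1) * max p q ^ k"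
proof -
  let ?y = "coding p q (\<lambda>l. \<sigma> (l + k))"
  have "\<bar>wcomp p q \<sigma> k x - coding p q \<sigma>\<bar> = ratio_prod p q \<sigma> k * \<bar>x - ?y\<bar>"
    using coding_wcomp[of \<sigma> k] ratio_prod_bounds(1)
    by (simp add: wcomp_affine abs_mult flip: right_diff_distrib)
  also have "\<dots> \<le> max p q ^ k * (B + 1)"
    using assms coding_unit_interval[of "\<lambda>l. \<sigma> (l + k)"] p
    by (intro mult_mono ratio_prod_bounds) auto
  finally show ?thesis by (simp add: mult.commute)
qed

lemma codings_invariant: "(\<Union>k\<in>{1,2,3,4}. S p q k ` codings p q) = codings p q"
proof (rule subset_antisym; rule subsetI)
  fix x assume "x \<in> (\<Union>k\<in>{1,2,3,4}. S p q k ` codings p q)"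
  then obtain k \<sigma> where "k \<in> {1,2,3,4}" "\<sigma> \<in> words" "x = S p q k (coding p q \<sigma>)"
    unfolding codings_def by auto
  moreover from this have "case_nat k \<sigma> \<in> words"
    by (auto simp: words_def split: nat.split)
  ultimately show "x \<in> codings p q"
    unfolding codings_def coding_Cons[symmetric] by simp
next
  fix x assume "x \<in> codings p q"
  then obtain \<sigma> where "\<sigma> \<in> words" "x = coding p q \<sigma>" unfolding codings_def by auto
  then have "\<sigma> 0 \<in> {1,2,3,4}" "x \<in> S p q (\<sigma> 0) ` codings p q"
    unfolding codings_def coding_shift[of \<sigma>] words_def by auto
  then show "x \<in> (\<Union>k\<in>{1,2,3,4}. S p q k ` codings p q)" by (rule UN_I)
qed

text \<open>Each point of K has a preimage in K under some S_k; iterating this choice gives an address.\<close>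
lemma invariant_subset_codings:
  assumes "bounded K" "K \<subseteq> (\<Union>k\<in>{1,2,3,4}. S p q k ` K)"
  shows "K \<subseteq> codings p q"
proof
  fix x assume "x \<in> K"
  obtain B where B: "\<And>y. y \<in> K \<Longrightarrow> \<bar>y\<bar> \<le> B"
    using assms(1) unfolding bounded_iff by auto
  have "\<forall>y\<in>K. \<exists>kz. fst kz \<in> {1,2,3,4} \<and> snd kz \<in> K \<and> S p q (fst kz) (snd kz) = y"
  proof
    fix y assume "y \<in> K"
    then obtain k z where "k \<in> {1,2,3,4}" "z \<in> K" "S p q k z = y" using assms(2) by blast
    then show "\<exists>kz. fst kz \<in> {1,2,3,4} \<and> snd kz \<in> K \<and> S p q (fst kz) (snd kz) = y"
      by (intro exI[of _ "(k, z)"]) simp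
  qed
  then obtain g where "\<forall>y\<in>K. fst (g y) \<in> {1,2,3,4} \<and> snd (g y) \<in> K \<and> S p q (fst (g y)) (snd (g y)) = y"
    by (rule bchoice[THEN exE])
  then have g: "\<And>y. y \<in> K \<Longrightarrow> fst (g y) \<in> {1,2,3,4}" "\<And>y. y \<in> K \<Longrightarrow> snd (g y) \<in> K"
    "\<And>y. y \<in> K \<Longrightarrow> S p q (fst (g y)) (snd (g y)) = y"
    by blast+
  define xs where "xs n = ((snd \<circ> g) ^^ n) x" for n
  define \<sigma> where "\<sigma> n = fst (g (xs n))" for n
  have xs_K: "xs n \<in> K" for n
    by (induction n) (simp_all add: xs_def \<open>x \<in> K\<close> g(2))
  have "\<sigma> \<in> words" unfolding words_def \<sigma>_def using g(1) xs_K by simp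
  have wcomp_xs: "wcomp p q \<sigma> n (xs n) = x" for n
  proof (induction n)
    case (Suc n)
    have "S p q (\<sigma> n) (xs (Suc n)) = xs n"
      unfolding \<sigma>_def using g(3)[OF xs_K[of n]] by (simp add: xs_def)
    then show ?case using Suc by simp
  qed (simp add: xs_def)
  have "x = coding p q \<sigma>"
  proof (rule eq_geometric_bound[OF max_bounds])
    show "\<bar>x - coding p q \<sigma>\<bar> \<le> (B + 1) * max p q ^ n" for n
      using wcomp_dist_coding[OF B[OF xs_K[of n]], of \<sigma> n] by (simp only: wcomp_xs)
  qed
  then show "x \<in> codings p q" unfolding codings_def using \<open>\<sigma> \<in> words\<close> by blast
qed

lemma codings_subset_invariant:
  assumes "closed K" "K \<noteq> {}" "(\<Union>k\<in>{1,2,3,4}. S p q k ` K) \<subseteq> K"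
  shows "codings p q \<subseteq> K"
proof
  fix x assume "x \<in> codings p q"
  then obtain \<sigma> where "\<sigma> \<in> words" "x = coding p q \<sigma>" unfolding codings_def by auto
  obtain y where "y \<in> K" using assms(2) by auto
  have wcomp_K: "wcomp p q \<sigma> n z \<in> K" if "z \<in> K" for n z
    using that
  proof (induction n arbitrary: z)
    case (Suc n)
    have "\<sigma> n \<in> {1,2,3,4}" using \<open>\<sigma> \<in> words\<close> by (simp add: words_def)
    then have "S p q (\<sigma> n) z \<in> (\<Union>k\<in>{1,2,3,4}. S p q k ` K)"
      by (rule UN_I) (rule imageI[OF Suc.prems])
    then have "S p q (\<sigma> n) z \<in> K" by (rule subsetD[OF assms(3)])
    then show ?case using Suc.IH by simp
  qed simp
  have "(\<lambda>n. wcomp p q \<sigma> n y) \<longlonglongrightarrow> coding p q \<sigma>"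
    by (rule LIMSEQ_geometric_bound[OF max_bounds wcomp_dist_coding[OF order_refl]])
  with assms(1) wcomp_K[OF \<open>y \<in> K\<close>] show "x \<in> K"
    unfolding \<open>x = coding p q \<sigma>\<close> by (rule closed_sequentially)
qed

lemma compact_invariant_eq_codings:
  assumes "compact K" "K \<noteq> {}" "K = (\<Union>k\<in>{1,2,3,4}. S p q k ` K)"
  shows "K = codings p q"
proof (rule subset_antisym)
  show "K \<subseteq> codings p q"
    using invariant_subset_codings[OF compact_imp_bounded[OF assms(1)] equalityD1[OF assms(3)]] .
  show "codings p q \<subseteq> K"
    using codings_subset_invariant[OF compact_imp_closed[OF assms(1)] assms(2) equalityD2[OF assms(3)]] .
qed

lemma codings_nonempty: "codings p q \<noteq> {}"
  unfolding codings_def words_def by (auto intro!: exI[of _ "\<lambda>_. 1"])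

text \<open>The closure of the codings is again compact and invariant, so by uniqueness it adds no points.\<close>
lemma compact_codings: "compact (codings p q)"
proof -
  have bounded: "bounded (codings p q)"
    using coding_unit_interval
    unfolding bounded_iff codings_def by (intro exI[of _ 1]) auto
  have continuous: "continuous_on UNIV (S p q k)" for k
    unfolding S_affine[abs_def] by (intro continuous_intros)
  have "(\<Union>k\<in>{1,2,3,4}. S p q k ` closure (codings p q))
      = (\<Union>k\<in>{1,2,3,4}. closure (S p q k ` codings p q))"
    by (simp only: image_closure_eq_closure_image[OF continuous bounded])
  also have "\<dots> = closure (\<Union>k\<in>{1,2,3,4}. S p q k ` codings p q)"
    by (simp add: closure_Un)
  finally have "closure (codings p q) = (\<Union>k\<in>{1,2,3,4}. S p q k ` closure (codings p q))"
    by (simp only: codings_invariant)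
  then have "closure (codings p q) = codings p q"
    using bounded codings_nonempty
    by (intro compact_invariant_eq_codings) (simp_all add: compact_closure)
  then show ?thesis
    using bounded unfolding compact_closure[symmetric] by simp
qed

lemma attractor_eq_codings: "attractor p q = codings p q"
  unfolding attractor_def
proof (rule the_equality)
  show "compact (codings p q) \<and> codings p q \<noteq> {} \<and>
      codings p q = (\<Union>k\<in>{1,2,3,4}. S p q k ` codings p q)"
    using compact_codings codings_nonempty codings_invariant by simp
next
  fix K assume "compact K \<and> K \<noteq> {} \<and> K = (\<Union>k\<in>{1,2,3,4}. S p q k ` K)"
  then show "K = codings p q" by (elim conjE) (rule compact_invariant_eq_codings)
qed

lemma piK_eq_coding:
  assumes "\<sigma> \<in> words"
  shows "piK p q \<sigma> = coding p q \<sigma>"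
  unfolding piK_def attractor_eq_codings
proof (rule the_equality)
  show "coding p q \<sigma> \<in> (\<Inter>k\<in>{1..}. wcomp p q \<sigma> k ` codings p q)"
  proof
    fix k :: nat
    have "coding p q (\<lambda>l. \<sigma> (l + k)) \<in> codings p q"
      using assms unfolding codings_def words_def by auto
    then show "coding p q \<sigma> \<in> wcomp p q \<sigma> k ` codings p q"
      by (subst coding_wcomp[of \<sigma> k]) (rule imageI)
  qed
next
  fix x assume x: "x \<in> (\<Inter>k\<in>{1..}. wcomp p q \<sigma> k ` codings p q)"
  show "x = coding p q \<sigma>"
  proof (rule eq_geometric_bound[OF max_bounds])
    fix n
    have "Suc n \<in> {1..}" by simp
    with x have "x \<in> wcomp p q \<sigma> (Suc n) ` codings p q" by (rule INT_D)
    then obtain \<tau> where x_eq: "x = wcomp p q \<sigma> (Suc n) (coding p q \<tau>)"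
      unfolding codings_def by blast
    have "\<bar>coding p q \<tau>\<bar> \<le> 1" using coding_unit_interval[of \<tau>] by simp
    from wcomp_dist_coding[OF this, of \<sigma> "Suc n"]
    show "\<bar>x - coding p q \<sigma>\<bar> \<le> (2 * max p q) * max p q ^ n"
      unfolding x_eq by (simp add: mult.assoc)
  qed
qed

end

lemma S_param_dist:
  fixes p q q' c A A' :: real
  assumes "0 \<le> p" "p \<le> c" "0 \<le> q'" "q' \<le> c" "A \<in> {0..1}"
  shows "\<bar>S p q k A - S p q' k A'\<bar> \<le> \<bar>q - q'\<bar> + c * \<bar>A - A'\<bar>"
proof -
  have contraction: "\<bar>r * (A - A')\<bar> \<le> c * \<bar>A - A'\<bar>" if "0 \<le> r" "r \<le> c" for r
    using that by (simp add: abs_mult mult_right_mono)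
  have perturbed: "\<bar>(q - q') * t + q' * (A - A')\<bar> \<le> \<bar>q - q'\<bar> + c * \<bar>A - A'\<bar>"
    if "\<bar>t\<bar> \<le> 1" for t
  proof -
    have "\<bar>(q - q') * t\<bar> \<le> \<bar>q - q'\<bar>"
      using that by (simp add: abs_mult mult_left_le)
    then show ?thesis
      using contraction[OF assms(3,4)] abs_triangle_ineq[of "(q - q') * t" "q' * (A - A')"]
      by linarith
  qed
  consider "k = 1 \<or> k = 3" | "k = 2" | "k \<noteq> 1" "k \<noteq> 2" "k \<noteq> 3" by blast
  then show ?thesis
  proof cases
    case 1
    then have "S p q k A - S p q' k A' = p * (A - A')" by (auto simp: S_def algebra_simps)
    then show ?thesis using contraction[OF assms(1,2)] by simp
  next
    case 2
    then have "S p q k A - S p q' k A' = (q - q') * A + q' * (A - A')" by (simp add: S_def algebra_simps)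
    then show ?thesis using perturbed[of A] assms(5) by simp
  next
    case 3
    then have "S p q k A - S p q' k A' = (q - q') * (A - 1) + q' * (A - A')"
      by (simp add: S_def algebra_simps)
    then show ?thesis using perturbed[of "A - 1"] assms(5) by simp
  qed
qed

lemma coding_param_dist:
  fixes p q q' c :: real
  assumes "0 < p" "p \<le> c" "0 < q" "q \<le> c" "0 < q'" "q' \<le> c" "c < 1"
  shows "\<bar>coding p q \<sigma> - coding p q' \<sigma>\<bar> \<le> \<bar>q - q'\<bar> / (1 - c)"
proof (rule bound_of_contraction[where f = "\<lambda>\<sigma>. coding p q \<sigma> - coding p q' \<sigma>"
      and g = "\<lambda>\<sigma> l. \<sigma> (Suc l)" and B = 1])
  have p: "0 < p" "p < 1" and q: "0 < q" "q < 1" and q': "0 < q'" "q' < 1"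
    using assms by auto
  show "\<bar>coding p q \<sigma> - coding p q' \<sigma>\<bar> \<le> 1" for \<sigma>
    using coding_unit_interval[OF p q, of \<sigma>] coding_unit_interval[OF p q', of \<sigma>] by auto
  show "\<bar>coding p q \<sigma> - coding p q' \<sigma>\<bar> \<le> \<bar>q - q'\<bar> + c *
      \<bar>coding p q (\<lambda>l. \<sigma> (Suc l)) - coding p q' (\<lambda>l. \<sigma> (Suc l))\<bar>" for \<sigma>
    unfolding coding_shift[OF p q, of \<sigma>] coding_shift[OF p q', of \<sigma>]
    using assms by (intro S_param_dist coding_unit_interval[OF p q]) auto
  show "0 \<le> c" "c < 1" using assms by auto
qed

lemma Dmn_power_diff:
  fixes p q q' :: real
  assumes "0 < p" "0 < n" "q \<in> Dmn m n p" "q' \<in> Dmn m n p"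
  shows "15 * p ^ m * \<bar>q - q'\<bar> \<le> \<bar>q ^ n - q' ^ n\<bar>"
proof -
  have ordered: "15 * p ^ m * (a - b) \<le> a ^ n - b ^ n"
    if "a \<in> Dmn m n p" "b \<in> Dmn m n p" "b \<le> a" for a b
  proof -
    have b: "0 < b" "b < 1/16" "15/16 * p ^ m \<le> b ^ n"
      using that(2) assms(1) by (auto simp: Dmn_def pos_le_divide_eq)
    have "b ^ n = b * b ^ (n - 1)"
      using assms(2) by (simp flip: power_Suc)
    moreover have "b * b ^ (n - 1) \<le> 1/16 * b ^ (n - 1)"
      using b by (intro mult_right_mono) auto
    ultimately have "15 * p ^ m \<le> b ^ (n - 1)"
      using b(3) by linarith
    then have "15 * p ^ m * (a - b) \<le> (a - b) * b ^ (n - 1)"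
      using that(3) by (simp add: mult.commute mult_left_mono)
    also have "\<dots> \<le> a ^ n - b ^ n"
      using b that(3) assms(2) by (intro power_diff_ge) auto
    finally show ?thesis .
  qed
  show ?thesis
  proof (cases "q' \<le> q")
    case True
    then show ?thesis using ordered[OF assms(3,4)] by simp
  next
    case False
    then show ?thesis using ordered[OF assms(4,3)] by (simp add: abs_minus_commute)
  qed
qed

lemma funpow_S1: "(S p q 1 ^^ m) x = p ^ m * x"
  by (induction m) (simp_all add: S_def)

lemma funpow_S2: "(S p q 2 ^^ n) x = q ^ n * x"
  by (induction n) (simp_all add: S_def)

lemma phi1_eq_coding:
  assumes "0 < p" "p < 1" "0 < q" "q < 1" "\<sigma> \<in> words"
  shows "phi1 p m i q \<sigma> = p ^ m * coding p q (case_nat i \<sigma>)"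
  unfolding phi1_def funpow_S1 using assms by (simp add: piK_eq_coding coding_Cons)

lemma phi2_eq_coding:
  assumes "0 < p" "p < 1" "0 < q" "q < 1" "\<tau> \<in> words"
  shows "phi2 p n j q \<tau> = q ^ n * coding p q (case_nat j \<tau>)"
  unfolding phi2_def funpow_S2 using assms by (simp add: piK_eq_coding coding_Cons)

lemma perturbation_lower_bound:
  fixes P D a a' g g' u u' :: real
  assumes "0 < P" "0 < D" "\<bar>a - a'\<bar> \<le> 16/15 * D" "\<bar>g - g'\<bar> \<le> 16/15 * D" "15/16 \<le> g"
    and "15 * P * D \<le> \<bar>u - u'\<bar>" "0 \<le> u'" "u' \<le> 16/15 * P"
  shows "11 * P * D < \<bar>P * a - u * g - P * a' + u' * g'\<bar>"
proof -
  have "15 * P * D * (15/16) \<le> \<bar>u - u'\<bar> * g"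
    using assms(1,2,5,6) by (intro mult_mono) auto
  then have main: "225/16 * (P * D) \<le> \<bar>(u - u') * g\<bar>"
    using assms(5) by (simp add: abs_mult)
  have "\<bar>P * (a - a')\<bar> \<le> P * (16/15 * D)"
    using assms(1,3) by (simp add: abs_mult mult_left_mono)
  then have first: "\<bar>P * (a - a')\<bar> \<le> 16/15 * (P * D)" by simp
  have "\<bar>u' * (g - g')\<bar> \<le> (16/15 * P) * (16/15 * D)"
    unfolding abs_mult using assms(4,7,8) by (intro mult_mono) auto
  then have last: "\<bar>u' * (g - g')\<bar> \<le> 256/225 * (P * D)" by simp
  have "(u - u') * g = P * (a - a') - u' * (g - g') - (P * a - u * g - P * a' + u' * g')"
    by (simp add: algebra_simps)
  then have "\<bar>(u - u') * g\<bar> \<le> \<bar>P * (a - a')\<bar> + \<bar>u' * (g - g')\<bar> + \<bar>P * a - u * g - P * a' + u' * g'\<bar>"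
    by arith
  moreover have "0 < P * D" using assms(1,2) by simp
  ultimately show ?thesis using main first last by linarith
qed

theorem lemma16:
  fixes p q q' :: real and m n i j :: nat and \<sigma> \<tau> :: "nat \<Rightarrow> nat"
  assumes "0 < p" "p < 1/16" "0 < m" "0 < n"
    and "i \<in> {3,4}" "j \<in> {3,4}"
    and "\<sigma> \<in> words" "\<tau> \<in> words"
    and "q \<in> Dmn m n p" "q' \<in> Dmn m n p" "q \<noteq> q'"
  shows "\<bar>phi1 p m i q \<sigma> - phi2 p n j q \<tau> - phi1 p m i q' \<sigma> + phi2 p n j q' \<tau>\<bar>
           > 11 * p ^ m * \<bar>q' - q\<bar>"
proof -
  have q: "0 < q" "q < 1/16" and q': "0 < q'" "q' < 1/16" "q' ^ n / p ^ m \<le> 16/15"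
    using assms(9,10) by (auto simp: Dmn_def)
  have p1: "p < 1" and q1: "q < 1" "q' < 1"
    using assms(2) q q' by auto
  have param_dist: "\<bar>coding p q \<rho> - coding p q' \<rho>\<bar> \<le> 16/15 * \<bar>q' - q\<bar>" for \<rho>
    using coding_param_dist[of p "1/16" q q' \<rho>] assms(1,2) q q'
    by (simp add: abs_minus_commute)
  show ?thesis
    unfolding phi1_eq_coding[OF assms(1) p1 q(1) q1(1) assms(7)]
      phi2_eq_coding[OF assms(1) p1 q(1) q1(1) assms(8)]
      phi1_eq_coding[OF assms(1) p1 q'(1) q1(2) assms(7)]
      phi2_eq_coding[OF assms(1) p1 q'(1) q1(2) assms(8)]
  proof (intro perturbation_lower_bound param_dist)
    show "15/16 \<le> coding p q (case_nat j \<tau>)"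
      using coding_Cons_lower[of p q j \<tau>] assms(1,2,6) q by simp
    show "15 * p ^ m * \<bar>q' - q\<bar> \<le> \<bar>q ^ n - q' ^ n\<bar>"
      using Dmn_power_diff[OF assms(1,4,9,10)] by (simp add: abs_minus_commute)
    show "q' ^ n \<le> 16/15 * p ^ m"
      using q'(3) assms(1) by (simp add: divide_le_eq)
  qed (use assms q' in auto)
qed

end
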